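(* Let $(\mathsf P,\mathcal O)$ be a semitopology and $p\in\mathsf P$. Then $p$ is regular if and only if $p$ is weakly regular and unconflicted.
   Context: A semitopology is a pair $(\mathsf P,\mathcal O)$ where $\mathsf P$ is a set and $\mathcal O\subseteq\mathcal P(\mathsf P)$ contains $\varnothing$ and $\mathsf P$ and is closed under arbitrary unions. Write $X\between Y$ when $X\cap Y\neq\varnothing$. $T$ is topen when it is nonempty, open, and for all open $O,O'$, $O\between T\between O'$ implies $O\between O'$. Points $p,p'$ are intertwined (written $p\between p'$) when every open set containing $p$ intersects every open set containing $p'$; $I(p)$ is the set of points intertwined with $p$; $K(p)=\mathrm{int}(I(p))$ where $\mathrm{int}(R)$ is the union of all open subsets of $R$. $p$ is regular when $p\in K(p)$ and $K(p)$ is topen; weakly regular when $p\in K(p)$. $p$ is unconflicted when for all $p',p''$, $p'\between p$ and $p\between p''$ imply $p'\between p''$ (otherwise $p$ is conflicted). *)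

theory Defs
  imports Main
begin

definition semitopology :: "'a set \<Rightarrow> 'a set set \<Rightarrow> bool" where
  "semitopology P Opens \<longleftrightarrow> (\<forall>X\<in>Opens. X \<subseteq> P) \<and> {} \<in> Opens \<and> P \<in> Opens \<and>
     (\<forall>S. S \<subseteq> Opens \<longrightarrow> \<Union>S \<in> Opens)"

definition meets :: "'a set \<Rightarrow> 'a set \<Rightarrow> bool" where
  "meets X Y \<longleftrightarrow> X \<inter> Y \<noteq> {}"

definition topen :: "'a set set \<Rightarrow> 'a set \<Rightarrow> bool" where
  "topen Opens T \<longleftrightarrow> T \<noteq> {} \<and> T \<in> Opens \<and>
     (\<forall>A\<in>Opens. \<forall>B\<in>Opens. meets A T \<and> meets T B \<longrightarrow> meets A B)"

definition intertwined :: "'a set set \<Rightarrow> 'a \<Rightarrow> 'a \<Rightarrow> bool" where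
  "intertwined Opens p q \<longleftrightarrow> (\<forall>A\<in>Opens. \<forall>B\<in>Opens. p \<in> A \<and> q \<in> B \<longrightarrow> meets A B)"

definition intertwined_set :: "'a set \<Rightarrow> 'a set set \<Rightarrow> 'a \<Rightarrow> 'a set" where
  "intertwined_set P Opens p = {q \<in> P. intertwined Opens p q}"

definition interior_of :: "'a set set \<Rightarrow> 'a set \<Rightarrow> 'a set" where
  "interior_of Opens R = \<Union>{A \<in> Opens. A \<subseteq> R}"

definition community :: "'a set \<Rightarrow> 'a set set \<Rightarrow> 'a \<Rightarrow> 'a set" where
  "community P Opens p = interior_of Opens (intertwined_set P Opens p)"

definition regular_pt :: "'a set \<Rightarrow> 'a set set \<Rightarrow> 'a \<Rightarrow> bool" where
  "regular_pt P Opens p \<longleftrightarrow> p \<in> community P Opens p \<and> topen Opens (community P Opens p)"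

definition weakly_regular_pt :: "'a set \<Rightarrow> 'a set set \<Rightarrow> 'a \<Rightarrow> bool" where
  "weakly_regular_pt P Opens p \<longleftrightarrow> p \<in> community P Opens p"

definition unconflicted :: "'a set \<Rightarrow> 'a set set \<Rightarrow> 'a \<Rightarrow> bool" where
  "unconflicted P Opens p \<longleftrightarrow> (\<forall>q\<in>P. \<forall>r\<in>P.
     intertwined Opens q p \<and> intertwined Opens p r \<longrightarrow> intertwined Opens q r)"

end

theory Submission
  imports Defs
begin

text \<open>If \<open>p\<close> lies in a topen set \<open>T\<close>, then any open neighbourhoods of points intertwined with
  \<open>p\<close> meet \<open>T\<close>, so topenness makes them meet each other; thus \<open>p\<close> is unconflicted.
  Conversely, if \<open>p\<close> is unconflicted then the points of \<open>I(p)\<close> are pairwise intertwined,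
  and a nonempty open set of pairwise intertwined points is topen; this applies to \<open>K(p)\<close>,
  which is open because opens are closed under unions.\<close>

lemma intertwined_sym: "intertwined Opens p q \<Longrightarrow> intertwined Opens q p"
  unfolding intertwined_def meets_def by blast

lemma interior_of_in_opens:
  assumes "semitopology P Opens"
  shows "interior_of Opens R \<in> Opens"
proof -
  have "{A \<in> Opens. A \<subseteq> R} \<subseteq> Opens" by blast
  with assms show ?thesis unfolding semitopology_def interior_of_def by blast
qed

lemma community_in_opens: "semitopology P Opens \<Longrightarrow> community P Opens p \<in> Opens"
  unfolding community_def by (rule interior_of_in_opens)

lemma community_subset_intertwined_set:
  "community P Opens p \<subseteq> intertwined_set P Opens p"
  unfolding community_def interior_of_def by blast

lemma unconflicted_if_mem_topen:
  assumes "topen Opens T" and "p \<in> T"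
  shows "unconflicted P Opens p"
  unfolding unconflicted_def
proof (intro ballI impI, elim conjE)
  fix q r assume qp: "intertwined Opens q p" and pr: "intertwined Opens p r"
  have T: "T \<in> Opens" using assms(1) by (simp add: topen_def)
  show "intertwined Opens q r"
    unfolding intertwined_def
  proof (intro ballI impI, elim conjE)
    fix A B assume A: "A \<in> Opens" and B: "B \<in> Opens" and "q \<in> A" "r \<in> B"
    have "meets A T" using qp A T \<open>q \<in> A\<close> \<open>p \<in> T\<close> unfolding intertwined_def by simp
    moreover have "meets T B" using pr B T \<open>r \<in> B\<close> \<open>p \<in> T\<close> unfolding intertwined_def by simp
    ultimately show "meets A B" using assms(1) A B unfolding topen_def by blast
  qed
qed

lemma topen_if_pairwise_intertwined:
  assumes "T \<in> Opens" and "T \<noteq> {}"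
    and "\<And>x y. x \<in> T \<Longrightarrow> y \<in> T \<Longrightarrow> intertwined Opens x y"
  shows "topen Opens T"
  unfolding topen_def
proof (intro conjI ballI impI assms(1,2), elim conjE)
  fix A B assume "A \<in> Opens" "B \<in> Opens" and "meets A T" "meets T B"
  then obtain x y where "x \<in> A" "x \<in> T" "y \<in> T" "y \<in> B"
    unfolding meets_def by blast
  with assms(3) \<open>A \<in> Opens\<close> \<open>B \<in> Opens\<close> show "meets A B"
    unfolding intertwined_def by blast
qed

lemma unconflicted_intertwined_set_pairwise_intertwined:
  assumes "unconflicted P Opens p"
    and "x \<in> intertwined_set P Opens p" and "y \<in> intertwined_set P Opens p"
  shows "intertwined Opens x y"
proof -
  have "x \<in> P" "y \<in> P" "intertwined Opens x p" "intertwined Opens p y"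
    using assms(2,3) intertwined_sym unfolding intertwined_set_def by auto
  with assms(1) show ?thesis unfolding unconflicted_def by blast
qed

theorem theorem5p28:
  fixes P :: "'a set" and Opens :: "'a set set" and p :: 'a
  assumes "semitopology P Opens" and "p \<in> P"
  shows "regular_pt P Opens p \<longleftrightarrow> weakly_regular_pt P Opens p \<and> unconflicted P Opens p"
proof
  assume "regular_pt P Opens p"
  then have "p \<in> community P Opens p" and "topen Opens (community P Opens p)"
    by (simp_all add: regular_pt_def)
  then show "weakly_regular_pt P Opens p \<and> unconflicted P Opens p"
    by (simp add: weakly_regular_pt_def unconflicted_if_mem_topen)
next
  let ?K = "community P Opens p"
  assume "weakly_regular_pt P Opens p \<and> unconflicted P Opens p"
  then have "p \<in> ?K" and unconfl: "unconflicted P Opens p"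
    by (auto simp: weakly_regular_pt_def)
  have "topen Opens ?K"
  proof (rule topen_if_pairwise_intertwined)
    show "?K \<in> Opens" using assms(1) by (rule community_in_opens)
    show "?K \<noteq> {}" using \<open>p \<in> ?K\<close> by blast
    show "intertwined Opens x y" if "x \<in> ?K" "y \<in> ?K" for x y
      using that community_subset_intertwined_set[of P Opens p]
      by (intro unconflicted_intertwined_set_pairwise_intertwined[OF unconfl]) auto
  qed
  with \<open>p \<in> ?K\<close> show "regular_pt P Opens p" by (simp add: regular_pt_def)
qed

end
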